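(* Let $\mathcal{P}=\langle P,\le\rangle$ be a finite bounded poset with $|P|\ge 2$, bottom $\bot$, top $\top$, and height $H$. Define $R^{+}_{c}(a)=[\,H(\uparrow a)-1,\; H+H(\downarrow a)-2\,]$ for $a\in P$. Then: (i) for every $a\in P$ we have $H(\uparrow a)-1\le H+H(\downarrow a)-2$, so $R^{+}_{c}(a)$ is an interval with nonnegative integer endpoints; moreover, writing $R^{+}_{c}(a)=[r_*(a),r^*(a)]$, the map $r_*$ is strictly antitone and $r^*$ is strictly isotone (i.e. $a<b$ implies $r_*(a)>r_*(b)$ and $r^*(a)<r^*(b)$), and consequently $a<b$ implies $R^{+}_{c}(a)\subsetneq R^{+}_{c}(b)$; that is, $R^{+}_{c}$ is a strict interval rank function for the subset order $\subseteq$; (ii) $R^{+}_{c}(\top)=[0,2(H-1)]$ and $R^{+}_{c}(\bot)=[H-1,H-1]$; (iii) if $R:P\to\overline{\mathbb{N}}$, $R(a)=[r_*(a),r^*(a)]$, is any strict interval rank function for $\subseteq$ (i.e. $a<b$ implies $R(a)\subsetneq R(b)$, and $r_*$ is strictly antitone and $r^*$ strictly isotone) such that $0\le r_*(a)\le r^*(a)\le 2(H-1)$ for all $a\in P$, then for every $a\in P$ we have $R(a)\ge_W R^{+}_{c}(a)$, i.e. $r_*(a)\ge H(\uparrow a)-1$ and $r^*(a)\ge H+H(\downarrow a)-2$.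
   Context: A poset is bounded if it has a least element $\bot$ and a greatest element $\top$. The height $H(\mathcal{Q})$ of a finite poset is the number of elements of its largest chain; $H=H(\mathcal{P})$. For $a\in P$, $\uparrow a=\{b\in P: b\ge a\}$ and $\downarrow a=\{b\in P:b\le a\}$, viewed as subposets; $H(\uparrow a)$, $H(\downarrow a)$ are their heights. $\overline{\mathbb{N}}$ denotes the set of intervals $[x_*,x^*]$ with integers $0\le x_*\le x^*$. The subset order on intervals: $[x_*,x^*]\subseteq[y_*,y^*]$ iff $x_*\ge y_*$ and $x^*\le y^*$. The weak order: $[x_*,x^*]\le_W[y_*,y^*]$ iff $x_*\le y_*$ and $x^*\le y^*$; $\ge_W$ is its dual. *)

theory Defs
  imports Main
begin

definition chain_in :: "'a::order set \<Rightarrow> 'a set \<Rightarrow> bool" where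
  "chain_in S C \<longleftrightarrow> C \<subseteq> S \<and> (\<forall>x\<in>C. \<forall>y\<in>C. x \<le> y \<or> y \<le> x)"

definition height :: "'a::order set \<Rightarrow> nat" where
  "height S = Max {card C | C. chain_in S C}"

definition up_set :: "'a::order set \<Rightarrow> 'a \<Rightarrow> 'a set" where
  "up_set S a = {b\<in>S. a \<le> b}"

definition down_set :: "'a::order set \<Rightarrow> 'a \<Rightarrow> 'a set" where
  "down_set S a = {b\<in>S. b \<le> a}"

text \<open>Intervals [x_*, x^*] represented as pairs (x_*, x^*) of integers.\<close>
definition iv_subset :: "int \<times> int \<Rightarrow> int \<times> int \<Rightarrow> bool" where
  "iv_subset x y \<longleftrightarrow> fst y \<le> fst x \<and> snd x \<le> snd y"

definition iv_psubset :: "int \<times> int \<Rightarrow> int \<times> int \<Rightarrow> bool" where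
  "iv_psubset x y \<longleftrightarrow> iv_subset x y \<and> x \<noteq> y"

definition weak_le :: "int \<times> int \<Rightarrow> int \<times> int \<Rightarrow> bool" where
  "weak_le x y \<longleftrightarrow> fst x \<le> fst y \<and> snd x \<le> snd y"

definition strict_interval_rank :: "'a::order set \<Rightarrow> ('a \<Rightarrow> int \<times> int) \<Rightarrow> bool" where
  "strict_interval_rank P R \<longleftrightarrow>
     (\<forall>a\<in>P. \<forall>b\<in>P. a < b \<longrightarrow>
        iv_psubset (R a) (R b) \<and> fst (R a) > fst (R b) \<and> snd (R a) < snd (R b))"

definition Rc :: "'a::order set \<Rightarrow> 'a \<Rightarrow> int \<times> int" where
  "Rc P a = (int (height (up_set P a)) - 1,
             int (height P) + int (height (down_set P a)) - 2)"

end

theory Submission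
  imports Defs
begin

text \<open>Strictness of both rank components is immediate: a maximum chain above \<open>b\<close> (below \<open>a\<close>)
  extends by \<open>a\<close> (by \<open>b\<close>) when \<open>a < b\<close>. For minimality, take a maximum chain \<open>C\<close> of \<open>\<up>a\<close>
  through \<open>a\<close>: along \<open>C\<close> the lower endpoints of \<open>R\<close> are distinct non-negative integers and
  \<open>r\<^sub>*(a)\<close> is the largest, so \<open>r\<^sub>*(a) \<ge> |C| - 1 = H(\<up>a) - 1\<close>. Likewise along a maximum chain of
  \<open>\<down>a\<close> through \<open>\<bottom>\<close> and \<open>a\<close> the upper endpoints are distinct and at least
  \<open>r\<^sup>*(\<bottom>) \<ge> r\<^sub>*(\<bottom>) \<ge> H - 1\<close>, whence \<open>r\<^sup>*(a) \<ge> H - 1 + H(\<down>a) - 1\<close>.\<close>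

lemma chain_in_finite: "finite S \<Longrightarrow> chain_in S C \<Longrightarrow> finite C"
  unfolding chain_in_def using finite_subset by blast

lemma finite_chain_cards:
  assumes "finite S" shows "finite {card C | C. chain_in S C}"
proof -
  have "{card C | C. chain_in S C} \<subseteq> card ` Pow S"
    by (auto simp: chain_in_def)
  then show ?thesis using assms finite_subset by blast
qed

lemma card_le_height: "finite S \<Longrightarrow> chain_in S C \<Longrightarrow> card C \<le> height S"
  unfolding height_def using finite_chain_cards by (intro Max_ge) auto

lemma height_attained:
  assumes "finite S" obtains C where "chain_in S C" "card C = height S"
proof -
  have "chain_in S {}" by (simp add: chain_in_def)
  then have "{card C | C. chain_in S C} \<noteq> {}" by blast
  from Max_in[OF finite_chain_cards[OF assms] this] that show ?thesis
    unfolding height_def by auto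
qed

lemma height_le_card:
  assumes "finite S" shows "height S \<le> card S"
proof -
  obtain C where "chain_in S C" "card C = height S" using height_attained assms .
  then show ?thesis using assms card_mono by (metis chain_in_def)
qed

lemma one_le_height: "finite S \<Longrightarrow> x \<in> S \<Longrightarrow> 1 \<le> height S"
  using card_le_height[of S "{x}"] by (simp add: chain_in_def)

lemma height_singleton: "height {x} = 1"
  using height_le_card[of "{x}"] one_le_height[of "{x}" x] by simp

lemma height_mono:
  assumes "finite T" "S \<subseteq> T" shows "height S \<le> height T"
proof -
  obtain C where "chain_in S C" "card C = height S"
    using height_attained assms finite_subset by metis
  then show ?thesis
    using card_le_height[OF assms(1), of C] assms(2) by (auto simp: chain_in_def)
qed

lemma maximum_chain_containing:
  assumes "finite S" "X \<subseteq> S" "\<forall>x\<in>X. \<forall>y\<in>S. x \<le> y \<or> y \<le> x"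
  obtains C where "chain_in S C" "card C = height S" "X \<subseteq> C"
proof -
  obtain C where C: "chain_in S C" "card C = height S" using height_attained assms(1) .
  have "chain_in S (C \<union> X)" using C(1) assms(2,3) by (auto simp: chain_in_def)
  then have "card (C \<union> X) \<le> card C" using C(2) card_le_height assms(1) by metis
  then have "C = C \<union> X"
    using card_seteq chain_in_finite[OF assms(1) \<open>chain_in S (C \<union> X)\<close>] by blast
  then show ?thesis using that C by blast
qed

lemma height_less_insert:
  assumes "finite T" "S \<subseteq> T" "x \<in> T - S" "\<forall>y\<in>S. x \<le> y \<or> y \<le> x"
  shows "height S < height T"
proof -
  obtain C where C: "chain_in S C" "card C = height S"
    using height_attained assms(1,2) finite_subset by metis
  have "chain_in T (insert x C)" using C(1) assms(2-4) by (auto simp: chain_in_def)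
  then have "card (insert x C) \<le> height T" using card_le_height assms(1) by blast
  moreover have "x \<notin> C" using C(1) assms(3) by (auto simp: chain_in_def)
  then have "card (insert x C) = card C + 1"
    using chain_in_finite[OF finite_subset[OF assms(2,1)] C(1)] by simp
  ultimately show ?thesis using C(2) by linarith
qed

lemma card_le_Max_int:
  fixes A :: "int set"
  assumes "finite A" "A \<noteq> {}" "\<forall>x\<in>A. lo \<le> x"
  shows "lo + int (card A) - 1 \<le> Max A"
proof -
  have "A \<subseteq> {lo..Max A}" using assms by auto
  then have "card A \<le> card {lo..Max A}" by (intro card_mono) auto
  moreover have "lo \<le> Max A" using assms by auto
  ultimately show ?thesis by simp
qed

lemma chain_value_bound:
  fixes f :: "'a::order \<Rightarrow> int"
  assumes "finite S" "chain_in S C" "m \<in> C"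
    and "\<forall>x\<in>C. \<forall>y\<in>C. x < y \<longrightarrow> f x \<noteq> f y"
    and "\<forall>x\<in>C. lo \<le> f x \<and> f x \<le> f m"
  shows "lo + int (card C) - 1 \<le> f m"
proof -
  have fin: "finite C" using chain_in_finite assms(1,2) .
  have "inj_on f C"
    using assms(2,4) unfolding chain_in_def inj_on_def by (metis order.order_iff_strict)
  then have "card (f ` C) = card C" by (rule card_image)
  moreover have "Max (f ` C) = f m" using assms(3,5) fin by (intro Max_eqI) auto
  moreover have "lo + int (card (f ` C)) - 1 \<le> Max (f ` C)"
    using assms(3,5) fin by (intro card_le_Max_int) auto
  ultimately show ?thesis by simp
qed

lemma height_up_set_less:
  "finite P \<Longrightarrow> a \<in> P \<Longrightarrow> a < b \<Longrightarrow> height (up_set P b) < height (up_set P a)"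
  by (rule height_less_insert[where x = a]) (auto simp: up_set_def)

lemma height_down_set_less:
  "finite P \<Longrightarrow> b \<in> P \<Longrightarrow> a < b \<Longrightarrow> height (down_set P a) < height (down_set P b)"
  by (rule height_less_insert[where x = b]) (auto simp: down_set_def)

lemma Rc_nonneg_le:
  assumes "finite P" "a \<in> P"
  shows "0 \<le> fst (Rc P a) \<and> fst (Rc P a) \<le> snd (Rc P a)"
proof -
  have "1 \<le> height (up_set P a)" "1 \<le> height (down_set P a)"
    using one_le_height[of _ a] assms by (simp_all add: up_set_def down_set_def)
  moreover have "height (up_set P a) \<le> height P"
    using assms(1) by (intro height_mono) (auto simp: up_set_def)
  ultimately show ?thesis by (simp add: Rc_def)
qed

lemma strict_interval_rank_Rc: "finite P \<Longrightarrow> strict_interval_rank P (Rc P)"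
  using height_up_set_less height_down_set_less
  by (fastforce simp: strict_interval_rank_def iv_psubset_def iv_subset_def Rc_def)

lemma Rc_top:
  assumes "tp \<in> P" "\<forall>x\<in>P. x \<le> tp"
  shows "Rc P tp = (0, 2 * (int (height P) - 1))"
proof -
  have "up_set P tp = {tp}" "down_set P tp = P"
    using assms by (auto simp: up_set_def down_set_def intro: order.antisym)
  then show ?thesis by (simp add: Rc_def height_singleton)
qed

lemma Rc_bot:
  assumes "bt \<in> P" "\<forall>x\<in>P. bt \<le> x"
  shows "Rc P bt = (int (height P) - 1, int (height P) - 1)"
proof -
  have "up_set P bt = P" "down_set P bt = {bt}"
    using assms by (auto simp: up_set_def down_set_def intro: order.antisym)
  then show ?thesis by (simp add: Rc_def height_singleton)
qed

lemma strict_interval_rank_fst_ge: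
  assumes fin: "finite P" and R: "strict_interval_rank P R"
    and nonneg: "\<forall>x\<in>P. 0 \<le> fst (R x)" and a: "a \<in> P"
  shows "int (height (up_set P a)) - 1 \<le> fst (R a)"
proof -
  have finU: "finite (up_set P a)" using fin by (simp add: up_set_def)
  obtain C where C: "chain_in (up_set P a) C" "card C = height (up_set P a)" "a \<in> C"
    using maximum_chain_containing[OF finU, of "{a}"] a by (auto simp: up_set_def)
  have CP: "\<forall>x\<in>C. x \<in> P \<and> a \<le> x" using C(1) by (auto simp: chain_in_def up_set_def)
  have antitone: "\<And>x y. x \<in> P \<Longrightarrow> y \<in> P \<Longrightarrow> x < y \<Longrightarrow> fst (R y) < fst (R x)"
    using R by (auto simp: strict_interval_rank_def)
  have "0 + int (card C) - 1 \<le> fst (R a)"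
  proof (rule chain_value_bound[OF finU C(1) C(3)])
    show "\<forall>x\<in>C. \<forall>y\<in>C. x < y \<longrightarrow> fst (R x) \<noteq> fst (R y)"
      using CP antitone by (metis order.asym)
    show "\<forall>x\<in>C. 0 \<le> fst (R x) \<and> fst (R x) \<le> fst (R a)"
      using CP nonneg antitone a by (metis order.order_iff_strict)
  qed
  then show ?thesis using C(2) by simp
qed

lemma strict_interval_rank_snd_ge:
  assumes fin: "finite P" and R: "strict_interval_rank P R"
    and ranges: "\<forall>x\<in>P. 0 \<le> fst (R x) \<and> fst (R x) \<le> snd (R x)"
    and bt: "bt \<in> P" "\<forall>x\<in>P. bt \<le> x" and a: "a \<in> P"
  shows "int (height P) + int (height (down_set P a)) - 2 \<le> snd (R a)"
proof -
  have finD: "finite (down_set P a)" using fin by (simp add: down_set_def)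
  obtain D where D: "chain_in (down_set P a) D" "card D = height (down_set P a)" "{bt, a} \<subseteq> D"
    using maximum_chain_containing[OF finD, of "{bt, a}"] a bt by (auto simp: down_set_def)
  have DP: "\<forall>x\<in>D. x \<in> P \<and> bt \<le> x \<and> x \<le> a" using D(1) bt by (auto simp: chain_in_def down_set_def)
  have isotone: "\<And>x y. x \<in> P \<Longrightarrow> y \<in> P \<Longrightarrow> x < y \<Longrightarrow> snd (R x) < snd (R y)"
    using R by (auto simp: strict_interval_rank_def)
  have "int (height (up_set P bt)) - 1 \<le> fst (R bt)"
    using strict_interval_rank_fst_ge fin R ranges bt(1) by blast
  moreover have "up_set P bt = P" using bt by (auto simp: up_set_def)
  ultimately have bt_ge: "int (height P) - 1 \<le> snd (R bt)" using ranges bt(1) by force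
  have "snd (R bt) + int (card D) - 1 \<le> snd (R a)"
  proof (rule chain_value_bound[OF finD D(1)])
    show "a \<in> D" using D(3) by simp
    show "\<forall>x\<in>D. \<forall>y\<in>D. x < y \<longrightarrow> snd (R x) \<noteq> snd (R y)"
      using DP isotone by (metis order.asym)
    show "\<forall>x\<in>D. snd (R bt) \<le> snd (R x) \<and> snd (R x) \<le> snd (R a)"
      using DP isotone bt(1) a by (metis order.order_iff_strict)
  qed
  then show ?thesis using D(2) bt_ge by linarith
qed

theorem proposition3:
  fixes P :: "'a::order set" and bt tp :: 'a
  assumes fin: "finite P" and card: "card P \<ge> 2"
    and bt: "bt \<in> P" and tp: "tp \<in> P"
    and bounded: "\<forall>x\<in>P. bt \<le> x \<and> x \<le> tp"
  shows "(\<forall>a\<in>P. 0 \<le> fst (Rc P a) \<and> fst (Rc P a) \<le> snd (Rc P a))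
       \<and> strict_interval_rank P (Rc P)
       \<and> Rc P tp = (0, 2 * (int (height P) - 1))
       \<and> Rc P bt = (int (height P) - 1, int (height P) - 1)
       \<and> (\<forall>R :: 'a \<Rightarrow> int \<times> int.
            strict_interval_rank P R
            \<and> (\<forall>a\<in>P. 0 \<le> fst (R a) \<and> fst (R a) \<le> snd (R a)
                       \<and> snd (R a) \<le> 2 * (int (height P) - 1))
            \<longrightarrow> (\<forall>a\<in>P. weak_le (Rc P a) (R a)))"
proof (intro conjI allI impI ballI)
  show "0 \<le> fst (Rc P a)" "fst (Rc P a) \<le> snd (Rc P a)" if "a \<in> P" for a
    using Rc_nonneg_le fin that by blast+
  show "strict_interval_rank P (Rc P)" using strict_interval_rank_Rc fin .
  show "Rc P tp = (0, 2 * (int (height P) - 1))" using Rc_top tp bounded by blast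
  show "Rc P bt = (int (height P) - 1, int (height P) - 1)" using Rc_bot bt bounded by blast
next
  fix R :: "'a \<Rightarrow> int \<times> int" and a
  assume "strict_interval_rank P R
            \<and> (\<forall>a\<in>P. 0 \<le> fst (R a) \<and> fst (R a) \<le> snd (R a)
                       \<and> snd (R a) \<le> 2 * (int (height P) - 1))"
    and a: "a \<in> P"
  then have R: "strict_interval_rank P R" "\<forall>x\<in>P. 0 \<le> fst (R x) \<and> fst (R x) \<le> snd (R x)"
    by auto
  show "weak_le (Rc P a) (R a)"
    using strict_interval_rank_fst_ge[OF fin R(1) _ a] strict_interval_rank_snd_ge[OF fin R _ _ a]
      R(2) bt bounded by (simp add: weak_le_def Rc_def)
qed

end
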